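(* If $C_1,C_2\subseteq\mathbb{F}_2^n$ are binary linear constant weight codes of the same dimension and the same weight, then they are permutation equivalent, i.e. there is $\sigma\in S_n$ with $\sigma(C_1)=C_2$.
   Context: A binary linear code of length $n$ is an $\mathbb{F}_2$-subspace of $\mathbb{F}_2^n$; it is a constant weight code of weight $w$ if every non-zero codeword has Hamming weight $w$. The symmetric group $S_n$ acts on $\mathbb{F}_2^n$ by $\sigma(v_1,\dots,v_n)=(v_{\sigma^{-1}(1)},\dots,v_{\sigma^{-1}(n)})$. *)

theory Defs
  imports "HOL-Analysis.Analysis" "HOL-Library.Z2"
begin

text \<open>Binary words of length n are elements of \<open>bit ^ 'n\<close> with \<open>CARD('n) = n\<close>;
  \<open>bit\<close> is the field with two elements (HOL-Library.Z2).\<close>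

definition hamming_weight :: "bit ^ 'n \<Rightarrow> nat" where
  "hamming_weight v = card {i. v $ i \<noteq> 0}"

definition binary_linear_code :: "(bit ^ 'n) set \<Rightarrow> bool" where
  "binary_linear_code C \<longleftrightarrow> vec.subspace C"

definition constant_weight_code :: "(bit ^ 'n) set \<Rightarrow> nat \<Rightarrow> bool" where
  "constant_weight_code C w \<longleftrightarrow> (\<forall>c\<in>C. c \<noteq> 0 \<longrightarrow> hamming_weight c = w)"

definition perm_act :: "('n \<Rightarrow> 'n) \<Rightarrow> bit ^ 'n \<Rightarrow> bit ^ 'n" where
  "perm_act \<sigma> v = (\<chi> i. v $ (inv \<sigma> i))"

end

theory Submission
  imports Defs
begin

text \<open>Fix a linear isomorphism \<open>\<phi> : C\<^sub>1 \<rightarrow> C\<^sub>2\<close>; since both codes have constant weight \<open>w\<close>,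
  \<open>\<phi>\<close> preserves Hamming weights. Each coordinate \<open>i\<close> of \<open>C\<^sub>1\<close> is a linear functional
  \<open>c \<mapsto> c\<^sub>i\<close> on \<open>C\<^sub>1\<close>, and similarly \<open>c \<mapsto> (\<phi> c)\<^sub>j\<close>. For a functional \<open>h\<close>, the number of
  coordinates equal to \<open>h\<close> is \<open>|C\<^sub>1|\<^sup>-\<^sup>1 \<Sum>\<^sub>c (-1)\<^bsup>h(c)\<^esup> (n - 2 wt c)\<close> by orthogonality of
  characters, and this only depends on the weights. So both families of coordinate functionals
  have the same multiplicities, and a bijection matching them is a permutation \<open>\<sigma>\<close> with
  \<open>\<sigma>(c) = \<phi>(c)\<close> on \<open>C\<^sub>1\<close>.\<close>

lemma UNIV_bit: "(UNIV :: bit set) = {0, 1}"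
  by (auto intro: bit.exhaust)

instance bit :: finite
  by standard (simp add: UNIV_bit)

lemma subspaces_eq_dim_linear_iso:
  fixes C1 C2 :: "('a::field ^ 'n) set"
  assumes "vec.subspace C1" and "vec.subspace C2" and "vec.dim C1 = vec.dim C2"
  shows "\<exists>\<phi>. Vector_Spaces.linear (*s) (*s) \<phi> \<and> inj \<phi> \<and> \<phi> ` C1 = C2"
proof -
  obtain B1 where B1: "B1 \<subseteq> C1" "vec.independent B1" "C1 \<subseteq> vec.span B1"
    by (rule vec.maximal_independent_subset)
  obtain B2 where B2: "B2 \<subseteq> C2" "vec.independent B2" "C2 \<subseteq> vec.span B2"
    by (rule vec.maximal_independent_subset)
  have span_B1: "vec.span B1 = C1" and span_B2: "vec.span B2 = C2"
    using B1 B2 assms(1,2) vec.span_minimal by blast+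
  have "card B1 = card B2"
    using B1 B2 assms(3) vec.basis_card_eq_dim by metis
  then obtain f where f: "bij_betw f B1 B2"
    using finite_same_card_bij vec.finiteI_independent B1(2) B2(2) by blast
  then obtain g where g: "Vector_Spaces.linear (*s) (*s) g" "inj g" "\<forall>x\<in>B1. g x = f x"
    using vec.linear_independent_extend_inj[of B1 f] B1(2) B2(2) by (auto simp: bij_betw_def)
  have "g ` B1 = B2"
    using f g(3) by (auto simp: bij_betw_def image_def)
  then have "g ` C1 = C2"
    using vec.linear_span_image[OF g(1), of B1] span_B1 span_B2 by simp
  with g show ?thesis by blast
qed

lemma permutes_match_fibres:
  fixes F :: "'a::finite \<Rightarrow> 'k" and G :: "'a \<Rightarrow> 'k"
  assumes "\<And>k. card {i. F i = k} = card {j. G j = k}"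
  shows "\<exists>\<sigma>. \<sigma> permutes (UNIV :: 'a set) \<and> (\<forall>i. G (\<sigma> i) = F i)"
proof -
  have "\<exists>b. bij_betw b {i. F i = k} {j. G j = k}" for k
    by (rule finite_same_card_bij) (simp_all add: assms)
  then obtain b where b: "\<And>k. bij_betw (b k) {i. F i = k} {j. G j = k}"
    by metis
  define \<sigma> where "\<sigma> i = b (F i) i" for i
  have G_\<sigma>: "G (\<sigma> i) = F i" for i
    using b[of "F i"] unfolding \<sigma>_def bij_betw_def by auto
  have "inj \<sigma>"
  proof (rule injI)
    fix x y
    assume eq: "\<sigma> x = \<sigma> y"
    then have "F x = F y"
      using G_\<sigma> by metis
    then show "x = y"
      using eq b[of "F x"] unfolding \<sigma>_def bij_betw_def inj_on_def by auto
  qed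
  then have "bij \<sigma>"
    by (simp add: bij_def finite_UNIV_inj_surj)
  then have "\<sigma> permutes UNIV"
    using bij_imp_permutes[of \<sigma> UNIV] by simp
  with G_\<sigma> show ?thesis by blast
qed

definition bit_character :: "bit \<Rightarrow> int" where
  "bit_character b = (if b = 0 then 1 else -1)"

lemma bit_character_add: "bit_character (a + b) = bit_character a * bit_character b"
  by (cases a; cases b) (simp_all add: bit_character_def)

lemma vec_bit_add_self [simp]: "(v :: bit ^ 'n) + v = 0"
  by (simp add: vec_eq_iff)

lemma sum_bit_character_nontrivial:
  fixes V :: "(bit ^ 'm) set" and \<psi> :: "bit ^ 'm \<Rightarrow> bit"
  assumes add_closed: "\<And>x y. x \<in> V \<Longrightarrow> y \<in> V \<Longrightarrow> x + y \<in> V"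
    and \<psi>_add: "\<And>x y. x \<in> V \<Longrightarrow> y \<in> V \<Longrightarrow> \<psi> (x + y) = \<psi> x + \<psi> y"
    and "c0 \<in> V" and "\<psi> c0 \<noteq> 0"
  shows "(\<Sum>c\<in>V. bit_character (\<psi> c)) = 0"
proof -
  have "(\<Sum>c\<in>V. bit_character (\<psi> c)) = (\<Sum>c\<in>V. bit_character (\<psi> (c + c0)))"
    by (rule sum.reindex_bij_witness[of _ "\<lambda>c. c + c0" "\<lambda>c. c + c0"])
       (auto simp: add_closed \<open>c0 \<in> V\<close> add.assoc)
  also have "\<dots> = (\<Sum>c\<in>V. - bit_character (\<psi> c))"
    using assms(3,4) by (intro sum.cong) (auto simp: \<psi>_add bit_character_add bit_character_def)
  finally show ?thesis
    by (simp add: sum_negf)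
qed

lemma sum_bit_character:
  fixes V :: "(bit ^ 'm) set" and \<psi> :: "bit ^ 'm \<Rightarrow> bit"
  assumes "\<And>x y. x \<in> V \<Longrightarrow> y \<in> V \<Longrightarrow> x + y \<in> V"
    and "\<And>x y. x \<in> V \<Longrightarrow> y \<in> V \<Longrightarrow> \<psi> (x + y) = \<psi> x + \<psi> y"
  shows "(\<Sum>c\<in>V. bit_character (\<psi> c)) = (if \<forall>c\<in>V. \<psi> c = 0 then int (card V) else 0)"
  using sum_bit_character_nontrivial[OF assms] by (auto simp: bit_character_def)

lemma sum_bit_character_coordinates:
  fixes v :: "'n::finite \<Rightarrow> bit"
  shows "(\<Sum>i\<in>UNIV. bit_character (v i)) = int CARD('n) - 2 * int (card {i. v i \<noteq> 0})"
proof -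
  have "(\<Sum>i\<in>UNIV. bit_character (v i)) = (\<Sum>i\<in>UNIV. 1 - 2 * (if v i \<noteq> 0 then 1 else 0))"
    by (intro sum.cong) (auto simp: bit_character_def)
  then show ?thesis
    by (simp add: sum_subtractf sum_distrib_left[symmetric] sum.If_cases)
qed

lemma card_agreeing_functionals_character_sum:
  fixes V :: "(bit ^ 'm) set" and k :: "'n::finite \<Rightarrow> bit ^ 'm \<Rightarrow> bit" and h :: "bit ^ 'm \<Rightarrow> bit"
  assumes add_closed: "\<And>x y. x \<in> V \<Longrightarrow> y \<in> V \<Longrightarrow> x + y \<in> V"
    and k_add: "\<And>i x y. x \<in> V \<Longrightarrow> y \<in> V \<Longrightarrow> k i (x + y) = k i x + k i y"
    and h_add: "\<And>x y. x \<in> V \<Longrightarrow> y \<in> V \<Longrightarrow> h (x + y) = h x + h y"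
  shows "int (card V) * int (card {i. \<forall>c\<in>V. k i c = h c})
    = (\<Sum>c\<in>V. bit_character (h c) * (\<Sum>i\<in>UNIV. bit_character (k i c)))"
proof -
  have agree_iff: "(k i c + h c = 0) = (k i c = h c)" for i c
    by (cases "k i c"; cases "h c") simp_all
  have "(\<Sum>c\<in>V. bit_character (h c) * (\<Sum>i\<in>UNIV. bit_character (k i c)))
      = (\<Sum>c\<in>V. \<Sum>i\<in>UNIV. bit_character (k i c + h c))"
    by (simp only: sum_distrib_left bit_character_add mult.commute)
  also have "\<dots> = (\<Sum>i\<in>UNIV. \<Sum>c\<in>V. bit_character (k i c + h c))"
    by (rule sum.swap)
  also have "\<dots> = (\<Sum>i\<in>UNIV. if \<forall>c\<in>V. k i c = h c then int (card V) else 0)"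
    by (intro sum.cong refl, subst sum_bit_character)
       (auto simp: add_closed k_add h_add agree_iff)
  also have "\<dots> = int (card V) * int (card {i. \<forall>c\<in>V. k i c = h c})"
    by (simp add: sum.If_cases)
  finally show ?thesis by simp
qed

lemma card_agreeing_functionals_eq:
  fixes V :: "(bit ^ 'm) set" and f g :: "'n::finite \<Rightarrow> bit ^ 'm \<Rightarrow> bit" and h :: "bit ^ 'm \<Rightarrow> bit"
  assumes "finite V" and "0 \<in> V"
    and add_closed: "\<And>x y. x \<in> V \<Longrightarrow> y \<in> V \<Longrightarrow> x + y \<in> V"
    and f_add: "\<And>i x y. x \<in> V \<Longrightarrow> y \<in> V \<Longrightarrow> f i (x + y) = f i x + f i y"
    and g_add: "\<And>i x y. x \<in> V \<Longrightarrow> y \<in> V \<Longrightarrow> g i (x + y) = g i x + g i y"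
    and h_add: "\<And>x y. x \<in> V \<Longrightarrow> y \<in> V \<Longrightarrow> h (x + y) = h x + h y"
    and same_weight: "\<And>c. c \<in> V \<Longrightarrow> card {i. f i c \<noteq> 0} = card {i. g i c \<noteq> 0}"
  shows "card {i. \<forall>c\<in>V. f i c = h c} = card {i. \<forall>c\<in>V. g i c = h c}"
proof -
  have "int (card V) * int (card {i. \<forall>c\<in>V. f i c = h c})
      = (\<Sum>c\<in>V. bit_character (h c) * (\<Sum>i\<in>UNIV. bit_character (f i c)))"
    using add_closed f_add h_add by (rule card_agreeing_functionals_character_sum)
  also have "\<dots> = (\<Sum>c\<in>V. bit_character (h c) * (\<Sum>i\<in>UNIV. bit_character (g i c)))"
    by (intro sum.cong refl) (simp only: sum_bit_character_coordinates same_weight)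
  also have "\<dots> = int (card V) * int (card {i. \<forall>c\<in>V. g i c = h c})"
    using add_closed g_add h_add by (rule card_agreeing_functionals_character_sum[symmetric])
  moreover have "card V > 0"
    using assms(1,2) card_gt_0_iff by blast
  ultimately show ?thesis
    by auto
qed

lemma weight_preserving_linear_map_is_permutation:
  fixes C :: "(bit ^ 'n) set" and \<phi> :: "bit ^ 'n \<Rightarrow> bit ^ 'n"
  assumes "vec.subspace C" and "Vector_Spaces.linear (*s) (*s) \<phi>"
    and weight: "\<And>c. c \<in> C \<Longrightarrow> hamming_weight (\<phi> c) = hamming_weight c"
  shows "\<exists>\<sigma>. \<sigma> permutes (UNIV :: 'n set) \<and> (\<forall>c\<in>C. perm_act \<sigma> c = \<phi> c)"
proof -
  note add_closed = vec.subspace_add[OF assms(1)]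
  note \<phi>_add = vec.linear_add[OF assms(2)]
  have "finite C"
    by (rule finite_subset[of _ UNIV]) auto
  \<comment> \<open>Coordinate functionals, made 0 off \<open>C\<close> so that equality means agreement on \<open>C\<close>.\<close>
  define F where "F i = (\<lambda>c. if c \<in> C then c $ i else 0)" for i
  define G where "G j = (\<lambda>c. if c \<in> C then \<phi> c $ j else 0)" for j
  have "card {i. F i = h} = card {j. G j = h}" for h
  proof (cases "(\<exists>i. F i = h) \<or> (\<exists>j. G j = h)")
    case True
    then have h_add: "\<And>x y. x \<in> C \<Longrightarrow> y \<in> C \<Longrightarrow> h (x + y) = h x + h y"
      and h_outside: "\<And>c. c \<notin> C \<Longrightarrow> h c = 0"
      by (auto simp: F_def G_def \<phi>_add add_closed)
    have "{i. F i = h} = {i. \<forall>c\<in>C. c $ i = h c}" and "{j. G j = h} = {j. \<forall>c\<in>C. \<phi> c $ j = h c}"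
      using h_outside by (auto simp: F_def G_def fun_eq_iff)
    moreover have "card {i. \<forall>c\<in>C. c $ i = h c} = card {j. \<forall>c\<in>C. \<phi> c $ j = h c}"
      by (rule card_agreeing_functionals_eq[where f = "\<lambda>i c. c $ i" and g = "\<lambda>j c. \<phi> c $ j"])
         (use weight in \<open>auto simp: \<open>finite C\<close> vec.subspace_0[OF assms(1)] add_closed \<phi>_add
            h_add hamming_weight_def\<close>)
    ultimately show ?thesis by simp
  qed auto
  then obtain \<sigma> where \<sigma>: "\<sigma> permutes (UNIV :: 'n set)" "\<And>i. G (\<sigma> i) = F i"
    using permutes_match_fibres[of F G] by blast
  have "perm_act \<sigma> c = \<phi> c" if "c \<in> C" for c
  proof -
    have "c $ inv \<sigma> j = \<phi> c $ j" for j
    proof -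
      have "G j c = F (inv \<sigma> j) c"
        using \<sigma>(2)[of "inv \<sigma> j"] permutes_inverses(1)[OF \<sigma>(1)] by simp
      then show ?thesis
        using \<open>c \<in> C\<close> by (simp add: F_def G_def)
    qed
    then show ?thesis
      by (simp add: perm_act_def vec_eq_iff)
  qed
  with \<sigma>(1) show ?thesis by blast
qed

theorem theorem4p3:
  fixes C1 C2 :: "(bit ^ 'n) set" and w :: nat
  assumes "binary_linear_code C1" and "binary_linear_code C2"
    and "constant_weight_code C1 w" and "constant_weight_code C2 w"
    and "vec.dim C1 = vec.dim C2"
  shows "\<exists>\<sigma>. \<sigma> permutes (UNIV :: 'n set) \<and> perm_act \<sigma> ` C1 = C2"
proof -
  have "vec.subspace C1" and "vec.subspace C2"
    using assms(1,2) by (auto simp: binary_linear_code_def)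
  then obtain \<phi> where \<phi>: "Vector_Spaces.linear (*s) (*s) \<phi>" "inj \<phi>" "\<phi> ` C1 = C2"
    using subspaces_eq_dim_linear_iso assms(5) by blast
  have "hamming_weight (\<phi> c) = hamming_weight c" if "c \<in> C1" for c
  proof (cases "c = 0")
    case False
    then have "\<phi> c \<noteq> 0"
      using \<phi>(2) vec.linear_0[OF \<phi>(1)] by (metis injD)
    then show ?thesis
      using assms(3,4) \<phi>(3) \<open>c \<in> C1\<close> False by (auto simp: constant_weight_code_def)
  qed (simp add: vec.linear_0[OF \<phi>(1)])
  then obtain \<sigma> where "\<sigma> permutes UNIV" "\<forall>c\<in>C1. perm_act \<sigma> c = \<phi> c"
    using weight_preserving_linear_map_is_permutation \<open>vec.subspace C1\<close> \<phi>(1) by blast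
  then show ?thesis
    using \<phi>(3) by (metis image_cong)
qed

end
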